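(* Let $a>0$, $k\ne0$, $\alpha=\arctan k$, and let $S_{a,k}=\{(r\cos\varphi,r\sin\varphi)\in\mathbb{R}^2: r=ae^{k\varphi},\ \varphi\in\mathbb{R}\}$ be the logarithmic spiral. Then $\mathrm{Ent}[S_{a,k}]\le 1/|\sin\alpha|<\infty$.
   Context: For a curve $\Gamma$, $F_{x_0,\lambda}[\Gamma]=\frac{1}{\sqrt{4\pi\lambda}}\int_\Gamma e^{-|x-x_0|^2/(4\lambda)}\,ds$ ($ds$ arc length) and $\mathrm{Ent}[\Gamma]=\sup_{x_0\in\mathbb{R}^2,\lambda>0}F_{x_0,\lambda}[\Gamma]$. *)

theory Defs
  imports "HOL-Analysis.Analysis"
begin

(* Gaussian-weighted length of a curve given by a C1 injective parametrisation gamma : R -> R^2; ds = |gamma'(t)| dt *)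
definition gauss_F :: "(real \<Rightarrow> real \<times> real) \<Rightarrow> real \<times> real \<Rightarrow> real \<Rightarrow> ennreal" where
  "gauss_F \<gamma> x0 l =
     (\<integral>\<^sup>+ t. ennreal (exp (- (norm (\<gamma> t - x0))\<^sup>2 / (4 * l)) * norm (vector_derivative \<gamma> (at t))
                       / sqrt (4 * pi * l)) \<partial>lborel)"

definition curve_Ent :: "(real \<Rightarrow> real \<times> real) \<Rightarrow> ennreal" where
  "curve_Ent \<gamma> = (SUP p \<in> UNIV \<times> {0<..}. gauss_F \<gamma> (fst p) (snd p))"

definition log_spiral :: "real \<Rightarrow> real \<Rightarrow> real \<Rightarrow> real \<times> real" where
  "log_spiral a k \<phi> = (a * exp (k * \<phi>) * cos \<phi>, a * exp (k * \<phi>) * sin \<phi>)"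

end

theory Submission imports Defs "HOL-Probability.Probability" begin

text \<open>Along the spiral, \<open>|\<gamma>'(t)| = sqrt (1 + k\<^sup>2) |\<gamma>(t)|\<close>, and the radius
\<open>r = |\<gamma>(t)| = a e\<^sup>k\<^sup>t\<close> is a monotone reparametrisation with \<open>dr = |k| r dt\<close>.
Since \<open>|\<gamma>(t) - x\<^sub>0| \<ge> |r - |x\<^sub>0||\<close>, the Gaussian weight on the spiral is dominated by a
one-dimensional Gaussian in \<open>r\<close> of variance \<open>2\<lambda>\<close> centred at \<open>|x\<^sub>0|\<close>; hence
\<open>F\<^sub>x\<^sub>0\<^sub>,\<^sub>\<lambda>\<close> is at most \<open>sqrt (1 + k\<^sup>2) / |k| = 1 / |sin \<alpha>|\<close> times the total mass of a
normal density, which is 1.\<close>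

lemma nn_integral_lborel_eq_SUP_Icc:
  fixes h :: "real \<Rightarrow> ennreal"
  assumes [measurable]: "h \<in> borel_measurable borel"
  shows "(\<integral>\<^sup>+x. h x \<partial>lborel) = (SUP n. \<integral>\<^sup>+x. h x * indicator {-real n..real n} x \<partial>lborel)"
proof -
  define H where "H n x = h x * indicator {-real n..real n} x" for n x
  have "incseq H"
    unfolding H_def incseq_def le_fun_def
    by (auto intro: mult_left_mono simp: indicator_def)
  moreover have SUP_H: "(SUP n. H n x) = h x" for x
  proof (rule antisym)
    show "(SUP n. H n x) \<le> h x"
      by (rule SUP_least) (simp add: H_def indicator_def)
    obtain N :: nat where "\<bar>x\<bar> \<le> real N" using real_arch_simple by blast
    then have "H N x = h x" by (simp add: H_def indicator_def abs_le_iff)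
    then show "h x \<le> (SUP n. H n x)" by (metis UNIV_I SUP_upper)
  qed
  moreover have "H n \<in> borel_measurable lborel" for n
    unfolding H_def by measurable
  ultimately have "(\<integral>\<^sup>+x. (SUP n. H n x) \<partial>lborel) = (SUP n. integral\<^sup>N lborel (H n))"
    by (intro nn_integral_monotone_convergence_SUP)
  then show ?thesis unfolding SUP_H by (simp add: H_def[abs_def])
qed

text \<open>As only an inequality is claimed, \<open>g\<close> need not be onto and \<open>f\<close> may take negative
values (they are truncated to \<open>0\<close> by \<open>ennreal\<close>).\<close>

lemma nn_integral_substitution_le:
  fixes f g g' :: "real \<Rightarrow> real"
  assumes f [measurable]: "f \<in> borel_measurable borel"
    and g: "\<And>x. (g has_real_derivative g' x) (at x)"
    and g'_cont: "continuous_on UNIV g'" and g'_nonneg: "\<And>x. g' x \<ge> 0"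
  shows "(\<integral>\<^sup>+x. ennreal (f (g x) * g' x) \<partial>lborel) \<le> (\<integral>\<^sup>+y. ennreal (f y) \<partial>lborel)"
proof -
  have [measurable]: "g \<in> borel_measurable borel" "g' \<in> borel_measurable borel"
    using g g'_cont by (auto intro: borel_measurable_continuous_onI
        has_real_derivative_imp_continuous_on continuous_on_subset)
  have "(\<integral>\<^sup>+x. ennreal (f (g x) * g' x) * indicator {-real n..real n} x \<partial>lborel)
          \<le> (\<integral>\<^sup>+y. ennreal (f y) \<partial>lborel)" for n
  proof -
    have "(\<integral>\<^sup>+x. ennreal (f (g x) * g' x) * indicator {-real n..real n} x \<partial>lborel)
        = (\<integral>\<^sup>+x. ennreal (f (g x) * g' x * indicator {-real n..real n} x) \<partial>lborel)"
      by (intro nn_integral_cong) (simp add: indicator_def)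
    also have "\<dots> = (\<integral>\<^sup>+y. ennreal (f y * indicator {g (-real n)..g (real n)} y) \<partial>lborel)"
      by (rule nn_integral_substitution[symmetric])
         (auto intro: g g'_nonneg continuous_on_subset[OF g'_cont] simp: set_borel_measurable_def)
    also have "\<dots> \<le> (\<integral>\<^sup>+y. ennreal (f y) \<partial>lborel)"
      by (intro nn_integral_mono) (simp add: indicator_def)
    finally show ?thesis .
  qed
  then show ?thesis
    by (subst nn_integral_lborel_eq_SUP_Icc) (auto intro: SUP_least)
qed

lemma nn_integral_exp_substitution_le:
  fixes f :: "real \<Rightarrow> real" and a k :: real
  assumes [measurable]: "f \<in> borel_measurable borel" and a: "a > 0"
  shows "(\<integral>\<^sup>+t. ennreal (f (a * exp (k * t)) * (\<bar>k\<bar> * a * exp (k * t))) \<partial>lborel)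
           \<le> (\<integral>\<^sup>+r. ennreal (f r) \<partial>lborel)"
proof -
  have increasing: "(\<integral>\<^sup>+t. ennreal (f (a * exp (c * t)) * (c * a * exp (c * t))) \<partial>lborel)
           \<le> (\<integral>\<^sup>+r. ennreal (f r) \<partial>lborel)" if "c \<ge> 0" for c
    using that a
    by (intro nn_integral_substitution_le) (auto intro!: derivative_eq_intros continuous_intros)
  show ?thesis
  proof (cases "k \<ge> 0")
    case True
    then show ?thesis using increasing[of k] by simp
  next
    case False
    have "(\<integral>\<^sup>+t. ennreal (f (a * exp (k * t)) * (\<bar>k\<bar> * a * exp (k * t))) \<partial>lborel)
        = ennreal \<bar>-1\<bar> * (\<integral>\<^sup>+t. ennreal (f (a * exp (k * (0 + -1 * t)))
                                      * (\<bar>k\<bar> * a * exp (k * (0 + -1 * t)))) \<partial>lborel)"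
      by (rule nn_integral_real_affine) auto
    also have "\<dots> = (\<integral>\<^sup>+t. ennreal (f (a * exp (-k * t)) * (-k * a * exp (-k * t))) \<partial>lborel)"
      using False by simp
    finally show ?thesis using increasing[of "-k"] False by simp
  qed
qed

lemma nn_integral_normal_density:
  assumes "\<sigma> > 0"
  shows "(\<integral>\<^sup>+x. ennreal (normal_density \<mu> \<sigma> x) \<partial>lborel) = 1"
  using assms by (simp add: nn_integral_eq_integral)

lemma norm_log_spiral:
  assumes "a > 0"
  shows "norm (log_spiral a k t) = a * exp (k * t)"
proof -
  have "(a * exp (k * t) * cos t)\<^sup>2 + (a * exp (k * t) * sin t)\<^sup>2
        = (a * exp (k * t))\<^sup>2 * ((sin t)\<^sup>2 + (cos t)\<^sup>2)"
    by algebra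
  then show ?thesis using assms by (simp add: log_spiral_def norm_Pair)
qed

lemma log_spiral_has_vector_derivative:
  "(log_spiral a k has_vector_derivative
     (a * exp (k * t) * (k * cos t - sin t), a * exp (k * t) * (k * sin t + cos t))) (at t)"
  unfolding log_spiral_def[abs_def]
  by (intro has_vector_derivative_Pair)
     (auto intro!: derivative_eq_intros
       simp: has_real_derivative_iff_has_vector_derivative[symmetric] algebra_simps)

lemma norm_vector_derivative_log_spiral:
  assumes "a > 0"
  shows "norm (vector_derivative (log_spiral a k) (at t)) = sqrt (1 + k\<^sup>2) * (a * exp (k * t))"
proof -
  have "(a * exp (k * t) * (k * cos t - sin t))\<^sup>2 + (a * exp (k * t) * (k * sin t + cos t))\<^sup>2
        = (a * exp (k * t))\<^sup>2 * (1 + k\<^sup>2) * ((sin t)\<^sup>2 + (cos t)\<^sup>2)"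
    by algebra
  also have "\<dots> = (sqrt (1 + k\<^sup>2) * (a * exp (k * t)))\<^sup>2"
    by (simp add: power_mult_distrib)
  finally show ?thesis
    using assms vector_derivative_at[OF log_spiral_has_vector_derivative]
    by (simp add: norm_Pair)
qed

lemma gauss_weight_le_radial:
  fixes p x0 :: "'a::real_normed_vector"
  assumes "l > 0"
  shows "exp (- (norm (p - x0))\<^sup>2 / (4 * l)) \<le> exp (- (norm p - norm x0)\<^sup>2 / (4 * l))"
proof -
  have "(norm p - norm x0)\<^sup>2 \<le> (norm (p - x0))\<^sup>2"
    using norm_triangle_ineq3[of p x0] by (metis abs_ge_zero power2_abs power_mono)
  then show ?thesis using assms by (simp add: divide_right_mono)
qed

lemma gauss_F_log_spiral_le:
  assumes a: "a > 0" and k: "k \<noteq> 0" and l: "l > 0"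
  shows "gauss_F (log_spiral a k) x0 l \<le> ennreal (sqrt (1 + k\<^sup>2) / \<bar>k\<bar>)"
proof -
  define C where "C = sqrt (1 + k\<^sup>2) / \<bar>k\<bar>"
  define f where "f = normal_density (norm x0) (sqrt (2 * l))"
  have "C \<ge> 0" by (simp add: C_def)
  have integrand_le: "exp (- (norm (log_spiral a k t - x0))\<^sup>2 / (4 * l))
             * norm (vector_derivative (log_spiral a k) (at t)) / sqrt (4 * pi * l)
        \<le> C * (f (a * exp (k * t)) * (\<bar>k\<bar> * a * exp (k * t)))" for t
  proof -
    let ?r = "a * exp (k * t)"
    have "exp (- (norm (log_spiral a k t - x0))\<^sup>2 / (4 * l))
            * norm (vector_derivative (log_spiral a k) (at t)) / sqrt (4 * pi * l)
        = exp (- (norm (log_spiral a k t - x0))\<^sup>2 / (4 * l)) * (sqrt (1 + k\<^sup>2) * ?r)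
            / sqrt (4 * pi * l)"
      using a by (simp add: norm_vector_derivative_log_spiral)
    also have "\<dots> \<le> exp (- (?r - norm x0)\<^sup>2 / (4 * l)) * (sqrt (1 + k\<^sup>2) * ?r) / sqrt (4 * pi * l)"
      using gauss_weight_le_radial[OF l, of "log_spiral a k t" x0] a l
      by (intro divide_right_mono mult_right_mono) (simp_all add: norm_log_spiral)
    also have "\<dots> = C * (f ?r * (\<bar>k\<bar> * ?r))"
      using k l by (simp add: C_def f_def normal_density_def real_sqrt_mult field_simps)
    finally show ?thesis by (simp add: mult.assoc)
  qed
  have "gauss_F (log_spiral a k) x0 l
        \<le> (\<integral>\<^sup>+t. ennreal C * ennreal (f (a * exp (k * t)) * (\<bar>k\<bar> * a * exp (k * t))) \<partial>lborel)"
    unfolding gauss_F_def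
  proof (intro nn_integral_mono)
    fix t
    have "f (a * exp (k * t)) * (\<bar>k\<bar> * a * exp (k * t)) \<ge> 0"
      using a by (simp add: f_def)
    then show "ennreal (exp (- (norm (log_spiral a k t - x0))\<^sup>2 / (4 * l))
             * norm (vector_derivative (log_spiral a k) (at t)) / sqrt (4 * pi * l))
        \<le> ennreal C * ennreal (f (a * exp (k * t)) * (\<bar>k\<bar> * a * exp (k * t)))"
      using integrand_le[of t] \<open>C \<ge> 0\<close> by (simp add: ennreal_mult[symmetric] ennreal_leI)
  qed
  also have "\<dots> = ennreal C * (\<integral>\<^sup>+t. ennreal (f (a * exp (k * t)) * (\<bar>k\<bar> * a * exp (k * t))) \<partial>lborel)"
    by (rule nn_integral_cmult) (simp add: f_def)
  also have "\<dots> \<le> ennreal C * (\<integral>\<^sup>+r. ennreal (f r) \<partial>lborel)"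
    by (intro mult_left_mono nn_integral_exp_substitution_le a) (auto simp: f_def)
  also have "\<dots> = ennreal C"
    using l by (simp add: f_def nn_integral_normal_density)
  finally show ?thesis unfolding C_def .
qed

theorem propositionA1:
  fixes a k :: real
  assumes "a > 0" and "k \<noteq> 0"
  shows "curve_Ent (log_spiral a k) \<le> ennreal (1 / \<bar>sin (arctan k)\<bar>)
         \<and> curve_Ent (log_spiral a k) < \<infinity>"
proof -
  have "1 / \<bar>sin (arctan k)\<bar> = sqrt (1 + k\<^sup>2) / \<bar>k\<bar>"
    by (simp add: sin_arctan)
  moreover have "curve_Ent (log_spiral a k) \<le> ennreal (sqrt (1 + k\<^sup>2) / \<bar>k\<bar>)"
    unfolding curve_Ent_def by (rule SUP_least) (auto intro!: gauss_F_log_spiral_le assms)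
  ultimately have bound: "curve_Ent (log_spiral a k) \<le> ennreal (1 / \<bar>sin (arctan k)\<bar>)"
    by simp
  show ?thesis
    using bound order.strict_trans1[OF bound ennreal_less_top] by (simp add: infinity_ennreal_def)
qed

end
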